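(* In the setting described in the context, for any $a_1,a_2\in\mathfrak{z}$ and any positive integer $p$, $$\mathrm{S}^r(a_1^pa_2)=\sum_{\substack{i,j\geq 0\\ i+j\le p}}(-1)^j r^{p-i}(1-r)^i\, a_1^i a_2 a_1^j\ast \mathrm{S}(a_1^{p-i-j}),$$ where $\mathrm{S}=\mathrm{S}^1$. Equivalently, for a formal variable $u$, $\mathrm{S}^r\!\left(\frac{1}{1-a_1u}a_2\right)=\frac{1}{1-a_1(1-r)u}\,a_2\,\frac{1}{1+a_1ru}\ast \mathrm{S}\!\left(\frac{1}{1-a_1ru}\right)$.
   Context: $\mathfrak{A}$ is a commutative $\mathbb{Q}$-algebra, $A$ a set of non-commutative letters, $\mathfrak{h}^1$ the non-commutative polynomial algebra over $\mathfrak{A}$ generated by $A$, and $\mathfrak{z}$ the $\mathfrak{A}$-span of $A$, equipped with a commutative (not necessarily unital) $\mathfrak{A}$-algebra product $\circ$. This acts on $\mathfrak{h}^1$ by $\mathfrak{A}$-linearity and $a\circ 1_w=0$, $a\circ(bw)=(a\circ b)w$ ($a,b\in A$, $w$ a word, $1_w$ the empty word). The harmonic product $\ast$ on $\mathfrak{h}^1$ is the $\mathfrak{A}$-bilinear product with $1_w\ast w=w\ast 1_w=w$ and $aw_1\ast bw_2=a(w_1\ast bw_2)+b(aw_1\ast w_2)+(a\circ b)(w_1\ast w_2)$ for $a,b\in A$ and words $w,w_1,w_2$ (extended $r$-linearly and to formal power series in $u$). For a variable $r$, $\mathrm{S}^r$ is the $\mathfrak{A}[r]$-linear map on $\mathfrak{h}^1[r]$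 with $\mathrm{S}^r(1_w)=1_w$ and $\mathrm{S}^r(aw)=a\mathrm{S}^r(w)+r\,a\circ\mathrm{S}^r(w)$ for $a\in A$ and words $w$; $\mathrm{S}:=\mathrm{S}^1$. Juxtaposition is concatenation; $a^n$ is the $n$-fold concatenation power ($a^0=1_w$). *)

theory Defs
  imports "HOL-Library.Poly_Mapping" "HOL-Computational_Algebra.Polynomial"
begin

text \<open>Non-commutative polynomials over a coefficient ring 'b in letters of type 'l:
  finitely supported maps from words (lists of letters) to coefficients.
  The span z of the letters is represented by finitely supported maps 'l to 'b.
  The product on z is given by structure constants c a b (the element a o b of z).\<close>

type_synonym ('l, 'b) ncpoly = "'l list \<Rightarrow>\<^sub>0 'b"
type_synonym ('l, 'b) zel = "'l \<Rightarrow>\<^sub>0 'b"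

definition scale :: "'b::comm_ring_1 \<Rightarrow> ('k \<Rightarrow>\<^sub>0 'b) \<Rightarrow> ('k \<Rightarrow>\<^sub>0 'b)" where
  "scale k p = Poly_Mapping.map (\<lambda>v. k * v) p"

definition ncmul :: "('l, 'b::comm_ring_1) ncpoly \<Rightarrow> ('l, 'b) ncpoly \<Rightarrow> ('l, 'b) ncpoly" where
  "ncmul p q = (\<Sum>v\<in>Poly_Mapping.keys p. \<Sum>w\<in>Poly_Mapping.keys q. Poly_Mapping.single (v @ w) (Poly_Mapping.lookup p v * Poly_Mapping.lookup q w))"

primrec ncpow :: "('l, 'b::comm_ring_1) ncpoly \<Rightarrow> nat \<Rightarrow> ('l, 'b) ncpoly" where
  "ncpow x 0 = Poly_Mapping.single [] 1"
| "ncpow x (Suc n) = ncmul x (ncpow x n)"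

definition zet :: "('l, 'b::comm_ring_1) zel \<Rightarrow> ('l, 'b) ncpoly" where
  "zet x = (\<Sum>a\<in>Poly_Mapping.keys x. Poly_Mapping.single [a] (Poly_Mapping.lookup x a))"

definition zmul :: "('l \<Rightarrow> 'l \<Rightarrow> ('l, 'b::comm_ring_1) zel) \<Rightarrow> ('l, 'b) zel \<Rightarrow> ('l, 'b) zel \<Rightarrow> ('l, 'b) zel" where
  "zmul c x y = (\<Sum>a\<in>Poly_Mapping.keys x. \<Sum>b\<in>Poly_Mapping.keys y. scale (Poly_Mapping.lookup x a * Poly_Mapping.lookup y b) (c a b))"

fun circw :: "('l \<Rightarrow> 'l \<Rightarrow> ('l, 'b::comm_ring_1) zel) \<Rightarrow> 'l \<Rightarrow> 'l list \<Rightarrow> ('l, 'b) ncpoly" where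
  "circw c a [] = 0"
| "circw c a (b # w) = ncmul (zet (c a b)) (Poly_Mapping.single w 1)"

definition circ_act :: "('l \<Rightarrow> 'l \<Rightarrow> ('l, 'b::comm_ring_1) zel) \<Rightarrow> ('l, 'b) zel \<Rightarrow> ('l, 'b) ncpoly \<Rightarrow> ('l, 'b) ncpoly" where
  "circ_act c x p = (\<Sum>a\<in>Poly_Mapping.keys x. \<Sum>w\<in>Poly_Mapping.keys p. scale (Poly_Mapping.lookup x a * Poly_Mapping.lookup p w) (circw c a w))"

function hw :: "('l \<Rightarrow> 'l \<Rightarrow> ('l, 'b::comm_ring_1) zel) \<Rightarrow> 'l list \<Rightarrow> 'l list \<Rightarrow> ('l, 'b) ncpoly" where
  "hw c [] w = Poly_Mapping.single w 1"
| "hw c (a # v) [] = Poly_Mapping.single (a # v) 1"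
| "hw c (a # v) (b # w) =
     ncmul (Poly_Mapping.single [a] 1) (hw c v (b # w))
   + ncmul (Poly_Mapping.single [b] 1) (hw c (a # v) w)
   + ncmul (zet (c a b)) (hw c v w)"
  by pat_completeness auto
termination by (relation "measure (\<lambda>(c, v, w). length v + length w)") auto

definition harm :: "('l \<Rightarrow> 'l \<Rightarrow> ('l, 'b::comm_ring_1) zel) \<Rightarrow> ('l, 'b) ncpoly \<Rightarrow> ('l, 'b) ncpoly \<Rightarrow> ('l, 'b) ncpoly" where
  "harm c p q = (\<Sum>v\<in>Poly_Mapping.keys p. \<Sum>w\<in>Poly_Mapping.keys q. scale (Poly_Mapping.lookup p v * Poly_Mapping.lookup q w) (hw c v w))"

primrec Sw :: "('l \<Rightarrow> 'l \<Rightarrow> ('l, 'b::comm_ring_1) zel) \<Rightarrow> 'b \<Rightarrow> 'l list \<Rightarrow> ('l, 'b) ncpoly" where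
  "Sw c r [] = Poly_Mapping.single [] 1"
| "Sw c r (a # w) = ncmul (Poly_Mapping.single [a] 1) (Sw c r w)
                    + scale r (circ_act c (Poly_Mapping.single a 1) (Sw c r w))"

definition Sr :: "('l \<Rightarrow> 'l \<Rightarrow> ('l, 'b::comm_ring_1) zel) \<Rightarrow> 'b \<Rightarrow> ('l, 'b) ncpoly \<Rightarrow> ('l, 'b) ncpoly" where
  "Sr c r p = (\<Sum>w\<in>Poly_Mapping.keys p. scale (Poly_Mapping.lookup p w) (Sw c r w))"

definition liftc :: "('k \<Rightarrow>\<^sub>0 'a::comm_ring_1) \<Rightarrow> ('k \<Rightarrow>\<^sub>0 'a poly)" where
  "liftc x = Poly_Mapping.map (\<lambda>v. [:v:]) x"

end

theory Submission
  imports Defs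
begin

(* Read everything coefficientwise in a formal variable u and put K(u) = sum_k K_k u^(k+1), where
   K_k = a o ... o a has k + 1 factors.  The rule S(a w) = a S(w) + a o S(w) gives
   S((1 - a u)^-1) = 1 + K(u) S((1 - a u)^-1).  Feeding this into the quasi-shuffle recursion, the
   series Phi(U) = (U (1 + a u)^-1) * S((1 - a u)^-1) satisfies
   Phi(x U) = x Phi(U) + K(u) Phi(x U) + (x o K(u)) Phi(U), and in particular Phi(1) = 1.
   Both sides of the proposition then solve the recursion
   X_p = r^p (a o ... o a o b) + sum_(k<p) r^k K_k X_(p-1-k), which determines X: the left side by
   S^r(a w) = a S^r(w) + r a o S^r(w), the right side by the recursion for Phi applied to the words
   a^i b together with r + (1 - r) = 1.  Commutativity and associativity of o are used only to
   rewrite b o K_(n-1) as a o ... o a o b. *)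

section \<open>Linear and bilinear extensions of finitely supported maps\<close>

lemma lookup_scale [simp]: "Poly_Mapping.lookup (scale k p) x = k * Poly_Mapping.lookup p x"
  by (simp add: scale_def map.rep_eq when_def)

interpretation pm: module "scale :: 'b::comm_ring_1 \<Rightarrow> ('k \<Rightarrow>\<^sub>0 'b) \<Rightarrow> ('k \<Rightarrow>\<^sub>0 'b)"
  by standard (simp_all add: poly_mapping_eqI lookup_add algebra_simps)

lemma scale_single [simp]: "scale k (Poly_Mapping.single w v) = Poly_Mapping.single w (k * v)"
  by (rule poly_mapping_eqI) (simp add: lookup_single when_def)

lemma keys_scale_subset: "Poly_Mapping.keys (scale k p) \<subseteq> Poly_Mapping.keys p"
  by (auto simp: in_keys_iff)

lemma poly_mapping_sum_single:
  "(\<Sum>k\<in>Poly_Mapping.keys p. Poly_Mapping.single k (Poly_Mapping.lookup p k)) = p"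
  by (rule poly_mapping_eqI) (simp add: lookup_sum lookup_single when_def in_keys_iff)

lemma poly_mapping_span_induct [case_names single scale add]:
  fixes p :: "'k \<Rightarrow>\<^sub>0 'b::comm_ring_1"
  assumes single: "\<And>k. P (Poly_Mapping.single k 1)"
    and scale: "\<And>v p. P p \<Longrightarrow> P (scale v p)"
    and add: "\<And>p q. P p \<Longrightarrow> P q \<Longrightarrow> P (p + q)"
  shows "P p"
proof -
  have single': "P (Poly_Mapping.single k v)" for k v
    using scale[OF single, of v k] by simp
  have "P (\<Sum>k\<in>A. Poly_Mapping.single k (Poly_Mapping.lookup p k))" if "finite A" for A
    using that
  proof (induction rule: finite_induct)
    case empty
    show ?case using single'[of _ 0] by simp
  qed (simp add: add single')
  from this[of "Poly_Mapping.keys p"] show ?thesis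
    by (simp add: poly_mapping_sum_single)
qed

lemma poly_mapping_span_induct2 [case_names single scale_left scale_right add_left add_right]:
  fixes p :: "'k \<Rightarrow>\<^sub>0 'b::comm_ring_1" and q :: "'m \<Rightarrow>\<^sub>0 'b"
  assumes single: "\<And>k l. P (Poly_Mapping.single k 1) (Poly_Mapping.single l 1)"
    and scale_left: "\<And>v p q. P p q \<Longrightarrow> P (scale v p) q"
    and scale_right: "\<And>v p q. P p q \<Longrightarrow> P p (scale v q)"
    and add_left: "\<And>p p' q. P p q \<Longrightarrow> P p' q \<Longrightarrow> P (p + p') q"
    and add_right: "\<And>p q q'. P p q \<Longrightarrow> P p q' \<Longrightarrow> P p (q + q')"
  shows "P p q"
proof (induction p rule: poly_mapping_span_induct)
  case (single k)
  show ?case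
    by (induction q rule: poly_mapping_span_induct) (use assms in auto)
qed (use assms in auto)

definition lin_ext :: "('k \<Rightarrow> ('n \<Rightarrow>\<^sub>0 'b::comm_ring_1)) \<Rightarrow> ('k \<Rightarrow>\<^sub>0 'b) \<Rightarrow> ('n \<Rightarrow>\<^sub>0 'b)" where
  "lin_ext G x = (\<Sum>a\<in>Poly_Mapping.keys x. scale (Poly_Mapping.lookup x a) (G a))"

lemma lin_ext_superset:
  assumes "finite A" "Poly_Mapping.keys x \<subseteq> A"
  shows "lin_ext G x = (\<Sum>a\<in>A. scale (Poly_Mapping.lookup x a) (G a))"
  unfolding lin_ext_def by (rule sum.mono_neutral_left) (use assms in \<open>auto simp: in_keys_iff\<close>)

lemma lin_ext_add: "lin_ext G (x + y) = lin_ext G x + lin_ext G y"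
  by (simp add: lin_ext_superset[where A = "Poly_Mapping.keys x \<union> Poly_Mapping.keys y"]
      keys_add lookup_add pm.scale_left_distrib sum.distrib)

lemma lin_ext_scale: "lin_ext G (scale k x) = scale k (lin_ext G x)"
  by (simp add: lin_ext_superset[where A = "Poly_Mapping.keys x"] keys_scale_subset
      pm.scale_sum_right)

lemma lin_ext_single: "lin_ext G (Poly_Mapping.single a v) = scale v (G a)"
  by (cases "v = 0") (simp_all add: lin_ext_def)

lemma lin_ext_add_fun: "lin_ext (\<lambda>a. F a + H a) x = lin_ext F x + lin_ext H x"
  by (simp add: lin_ext_def pm.scale_right_distrib sum.distrib)

lemma lin_ext_scale_fun: "lin_ext (\<lambda>a. scale k (F a)) x = scale k (lin_ext F x)"
  by (simp add: lin_ext_def pm.scale_sum_right mult.commute)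

locale linear_extension =
  fixes f :: "('k \<Rightarrow>\<^sub>0 'b::comm_ring_1) \<Rightarrow> ('n \<Rightarrow>\<^sub>0 'b)"
    and G :: "'k \<Rightarrow> ('n \<Rightarrow>\<^sub>0 'b)"
  assumes eq_lin_ext: "f x = lin_ext G x"
begin

sublocale additive f
  by standard (simp add: eq_lin_ext lin_ext_add)

lemma scale: "f (scale k x) = scale k (f x)"
  by (simp add: eq_lin_ext lin_ext_scale)

lemma single: "f (Poly_Mapping.single a v) = scale v (G a)"
  by (simp add: eq_lin_ext lin_ext_single)

end

locale bilinear_extension =
  fixes f :: "('k \<Rightarrow>\<^sub>0 'b::comm_ring_1) \<Rightarrow> ('m \<Rightarrow>\<^sub>0 'b) \<Rightarrow> ('n \<Rightarrow>\<^sub>0 'b)"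
    and G :: "'k \<Rightarrow> 'm \<Rightarrow> ('n \<Rightarrow>\<^sub>0 'b)"
  assumes eq_lin_ext: "f x y = lin_ext (\<lambda>a. lin_ext (G a) y) x"
begin

sublocale left: additive "\<lambda>x. f x y"
  by standard (simp add: eq_lin_ext lin_ext_add)

sublocale right: additive "f x"
  by standard (simp add: eq_lin_ext lin_ext_add lin_ext_add_fun)

lemma scale_left: "f (scale k x) y = scale k (f x y)"
  by (simp add: eq_lin_ext lin_ext_scale)

lemma scale_right: "f x (scale k y) = scale k (f x y)"
  by (simp add: eq_lin_ext lin_ext_scale lin_ext_scale_fun)

lemma single: "f (Poly_Mapping.single a v) (Poly_Mapping.single b w) = scale (v * w) (G a b)"
  by (simp add: eq_lin_ext lin_ext_single mult.commute)

end

lemma bilinear_extensionI: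
  assumes "\<And>x y. f x y = (\<Sum>a\<in>Poly_Mapping.keys x. \<Sum>b\<in>Poly_Mapping.keys y.
      scale (Poly_Mapping.lookup x a * Poly_Mapping.lookup y b) (G a b))"
  shows "bilinear_extension f G"
  by standard (simp add: assms lin_ext_def pm.scale_sum_right mult.commute)

interpretation ncmul: bilinear_extension ncmul "\<lambda>v w. Poly_Mapping.single (v @ w) 1"
  by (rule bilinear_extensionI) (simp add: ncmul_def)

interpretation zmul: bilinear_extension "zmul c" c
  by (rule bilinear_extensionI) (simp add: zmul_def)

interpretation circ_act: bilinear_extension "circ_act c" "circw c"
  by (rule bilinear_extensionI) (simp add: circ_act_def)

interpretation harm: bilinear_extension "harm c" "hw c"
  by (rule bilinear_extensionI) (simp add: harm_def)

interpretation zet: linear_extension zet "\<lambda>a. Poly_Mapping.single [a] 1"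
  by standard (simp add: zet_def lin_ext_def)

interpretation Sr: linear_extension "Sr c r" "Sw c r"
  by standard (simp add: Sr_def lin_ext_def)

abbreviation empty_word :: "('l, 'b::comm_ring_1) ncpoly" where
  "empty_word \<equiv> Poly_Mapping.single [] 1"

abbreviation lmul :: "('l, 'b::comm_ring_1) zel \<Rightarrow> ('l, 'b) ncpoly \<Rightarrow> ('l, 'b) ncpoly" where
  "lmul x W \<equiv> ncmul (zet x) W"

section \<open>Concatenation, the harmonic product and \<open>S\<^sup>r\<close>\<close>

lemmas linearity_simps = ncmul.left.add ncmul.right.add ncmul.scale_left ncmul.scale_right
  zet.add zet.scale zmul.left.add zmul.right.add zmul.scale_left zmul.scale_right
  circ_act.left.add circ_act.right.add circ_act.scale_left circ_act.scale_right
  harm.left.add harm.right.add harm.scale_left harm.scale_right Sr.add Sr.scale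
  pm.scale_right_distrib

lemma ncmul_assoc: "ncmul (ncmul p q) s = ncmul p (ncmul q s)"
proof (induction p q rule: poly_mapping_span_induct2)
  case (single v w)
  show ?case
    by (induction s rule: poly_mapping_span_induct) (simp_all add: ncmul.single linearity_simps)
qed (simp_all add: linearity_simps)

lemma ncmul_empty_left [simp]: "ncmul empty_word p = p"
  by (induction p rule: poly_mapping_span_induct) (simp_all add: ncmul.single linearity_simps)

lemma ncmul_empty_right [simp]: "ncmul p empty_word = p"
  by (induction p rule: poly_mapping_span_induct) (simp_all add: ncmul.single linearity_simps)

lemma hw_Nil_right [simp]: "hw c v [] = Poly_Mapping.single v 1"
  by (cases v) simp_all

lemma harm_empty_left [simp]: "harm c empty_word p = p"
  by (induction p rule: poly_mapping_span_induct) (simp_all add: harm.single linearity_simps)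

lemma harm_empty_right [simp]: "harm c p empty_word = p"
  by (induction p rule: poly_mapping_span_induct) (simp_all add: harm.single linearity_simps)

lemma circ_act_empty [simp]: "circ_act c x empty_word = 0"
  by (induction x rule: poly_mapping_span_induct) (simp_all add: circ_act.single linearity_simps)

lemma Sr_empty [simp]: "Sr c r empty_word = empty_word"
  by (simp add: Sr.single)

lemma zet_single [simp]: "zet (Poly_Mapping.single a v) = Poly_Mapping.single [a] v"
  by (simp add: zet.single)

lemma circ_act_lmul: "circ_act c x (lmul y W) = lmul (zmul c x y) W"
proof (induction x y rule: poly_mapping_span_induct2)
  case (single a b)
  show ?case
    by (induction W rule: poly_mapping_span_induct)
      (simp_all add: ncmul.single circ_act.single zmul.single linearity_simps)
qed (simp_all add: linearity_simps)

lemma circ_act_zet: "circ_act c x (zet y) = zet (zmul c x y)"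
  using circ_act_lmul[of c x y empty_word] by simp

lemma Sr_lmul: "Sr c r (lmul x W) = lmul x (Sr c r W) + scale r (circ_act c x (Sr c r W))"
proof (induction x W rule: poly_mapping_span_induct2)
  case (single a w)
  show ?case
    by (simp add: ncmul.single Sr.single)
qed (simp_all add: linearity_simps mult.commute)

lemma harm_lmul_lmul:
  "harm c (lmul x U) (lmul y V) =
     lmul x (harm c U (lmul y V)) + lmul y (harm c (lmul x U) V) + lmul (zmul c x y) (harm c U V)"
proof (induction x U rule: poly_mapping_span_induct2)
  case (single a v)
  show ?case
  proof (induction y V rule: poly_mapping_span_induct2)
    case (single b w)
    show ?case
      by (simp add: ncmul.single harm.single zmul.single)
  qed (simp_all add: linearity_simps)
qed (simp_all add: linearity_simps)

section \<open>The product on \<open>z\<close> and extension of scalars\<close>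

lemma zmul_commute:
  assumes "\<And>a b. c a b = c b a"
  shows "zmul c x y = zmul c y x"
  by (induction x y rule: poly_mapping_span_induct2)
    (simp_all add: zmul.single assms linearity_simps)

lemma zmul_left_commute:
  assumes comm: "\<And>a b. c a b = c b a"
    and assoc: "\<And>x y z. zmul c (zmul c x y) z = zmul c x (zmul c y z)"
  shows "zmul c x (zmul c y z) = zmul c y (zmul c x z)"
proof -
  have "zmul c x (zmul c y z) = zmul c (zmul c x y) z"
    by (rule assoc[symmetric])
  also have "\<dots> = zmul c (zmul c y x) z"
    using zmul_commute[OF comm] by (rule arg_cong)
  also have "\<dots> = zmul c y (zmul c x z)"
    by (rule assoc)
  finally show ?thesis .
qed

lemma zmul_funpow_swap:
  assumes comm: "\<And>a b. c a b = c b a"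
    and assoc: "\<And>x y z. zmul c (zmul c x y) z = zmul c x (zmul c y z)"
  shows "zmul c y ((zmul c x ^^ k) x) = (zmul c x ^^ Suc k) y"
proof (induction k)
  case 0
  show ?case by (simp add: zmul_commute[OF comm])
next
  case (Suc k)
  then show ?case by (simp add: zmul_left_commute[OF comm assoc, of y x])
qed

lemma liftc_single [simp]: "liftc (Poly_Mapping.single a v) = Poly_Mapping.single a [:v:]"
  by (rule poly_mapping_eqI) (simp add: liftc_def map.rep_eq lookup_single when_def)

lemma lookup_liftc: "Poly_Mapping.lookup (liftc x) a = [:Poly_Mapping.lookup x a:]"
  by (simp add: liftc_def map.rep_eq when_def)

lemma liftc_add: "liftc (x + y) = liftc x + liftc y"
  by (rule poly_mapping_eqI) (simp add: lookup_liftc lookup_add)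

lemma liftc_scale: "liftc (scale k x) = scale [:k:] (liftc x)"
  by (rule poly_mapping_eqI) (simp add: lookup_liftc)

lemma zmul_liftc: "zmul (\<lambda>a b. liftc (c a b)) (liftc x) (liftc y) = liftc (zmul c x y)"
  by (induction x y rule: poly_mapping_span_induct2)
    (simp_all add: zmul.single liftc_add liftc_scale pCons_one linearity_simps)

lemma zmul_liftc_assoc:
  assumes assoc: "\<And>x y z. zmul c (zmul c x y) z = zmul c x (zmul c y z)"
  shows "zmul (\<lambda>a b. liftc (c a b)) (zmul (\<lambda>a b. liftc (c a b)) x y) z
       = zmul (\<lambda>a b. liftc (c a b)) x (zmul (\<lambda>a b. liftc (c a b)) y z)"
proof (induction x y rule: poly_mapping_span_induct2)
  case (single a b)
  show ?case
  proof (induction z rule: poly_mapping_span_induct)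
    case (single d)
    have single_eq: "Poly_Mapping.single k 1 = liftc (Poly_Mapping.single k 1)" for k :: 'l
      by (simp add: pCons_one)
    show ?case
      by (simp only: single_eq zmul_liftc assoc)
  qed (simp_all add: linearity_simps)
qed (simp_all add: linearity_simps)

section \<open>Convolution with left multiplication\<close>

lemma sum_triangle_swap:
  fixes n :: nat
  shows "(\<Sum>i<n. \<Sum>k<n - i. f i k) = (\<Sum>k<n. \<Sum>i<n - k. f i k)"
proof -
  have "(\<Sum>i<n. \<Sum>k<n - i. f i k) = (\<Sum>i<n. \<Sum>k\<in>{k\<in>{..<n}. i + k < n}. f i k)"
    by (intro sum.cong) auto
  also have "\<dots> = (\<Sum>k<n. \<Sum>i\<in>{i\<in>{..<n}. i + k < n}. f i k)"
    by (rule sum.swap_restrict) auto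
  also have "\<dots> = (\<Sum>k<n. \<Sum>i<n - k. f i k)"
    by (intro sum.cong) auto
  finally show ?thesis .
qed

(* The coefficient of u^n in Y(u) X(u), where Y(u) = sum_k y_k u^(k+1) and X(u) = sum_m X_m u^m. *)
definition lmul_conv ::
    "(nat \<Rightarrow> ('l, 'b::comm_ring_1) zel) \<Rightarrow> (nat \<Rightarrow> ('l, 'b) ncpoly) \<Rightarrow> nat \<Rightarrow> ('l, 'b) ncpoly" where
  "lmul_conv y X n = (\<Sum>k<n. lmul (y k) (X (n - Suc k)))"

lemma lmul_conv_0 [simp]: "lmul_conv y X 0 = 0"
  by (simp add: lmul_conv_def)

lemma lmul_conv_Suc: "lmul_conv y X (Suc n) = lmul (y 0) (X n) + lmul_conv (\<lambda>k. y (Suc k)) X n"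
  by (simp only: lmul_conv_def sum.lessThan_Suc_shift) simp

lemma lmul_conv_Suc_last: "lmul_conv y X (Suc n) = lmul_conv y (\<lambda>m. X (Suc m)) n + lmul (y n) (X 0)"
  by (simp add: lmul_conv_def Suc_diff_Suc)

lemma lmul_conv_cong: "(\<And>m. m < n \<Longrightarrow> X m = X' m) \<Longrightarrow> lmul_conv y X n = lmul_conv y X' n"
  by (auto simp: lmul_conv_def intro!: sum.cong)

lemma lmul_conv_diff: "lmul_conv y (\<lambda>m. X m - X' m) n = lmul_conv y X n - lmul_conv y X' n"
  by (simp add: lmul_conv_def ncmul.right.diff sum_subtractf)

lemma lmul_conv_zero [simp]: "lmul_conv y (\<lambda>m. 0) n = 0"
  by (simp add: lmul_conv_def ncmul.right.zero)

lemma circ_act_lmul_conv: "circ_act c x (lmul_conv y X n) = lmul_conv (\<lambda>k. zmul c x (y k)) X n"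
  by (simp add: lmul_conv_def circ_act.right.sum circ_act_lmul)

lemma scale_lmul_conv: "scale t (lmul_conv y X n) = lmul_conv (\<lambda>k. scale t (y k)) X n"
  by (simp add: lmul_conv_def pm.scale_sum_right linearity_simps)

lemma scale_power_lmul_conv_Suc:
  "scale (r ^ n) (lmul_conv y X (Suc n))
     = lmul_conv (\<lambda>k. scale (r ^ k) (y k)) (\<lambda>m. scale (r ^ m) (X m)) (Suc n)"
  unfolding lmul_conv_def pm.scale_sum_right
proof (intro sum.cong refl)
  fix k assume "k \<in> {..<Suc n}"
  then have "r ^ n = r ^ k * r ^ (Suc n - Suc k)"
    by (simp flip: power_add)
  then show "scale (r ^ n) (lmul (y k) (X (Suc n - Suc k)))
      = lmul (scale (r ^ k) (y k)) (scale (r ^ (Suc n - Suc k)) (X (Suc n - Suc k)))"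
    by (simp add: linearity_simps mult.commute)
qed

lemma scale_power_lmul_conv:
  "scale (r ^ n) (lmul_conv y X n)
     = scale r (lmul_conv (\<lambda>k. scale (r ^ k) (y k)) (\<lambda>m. scale (r ^ m) (X m)) n)"
proof (cases n)
  case (Suc m)
  then show ?thesis
    by (simp only: power_Suc pm.scale_scale[symmetric] scale_power_lmul_conv_Suc)
qed simp

lemma sum_scale_lmul_conv:
  "(\<Sum>j\<le>n. scale (w j) (lmul_conv y (h j) (n - j)))
     = lmul_conv y (\<lambda>m. \<Sum>j\<le>m. scale (w j) (h j (m - j))) n"
proof -
  have "(\<Sum>j\<le>n. scale (w j) (lmul_conv y (h j) (n - j)))
      = (\<Sum>j<n. \<Sum>k<n - j. lmul (y k) (scale (w j) (h j (n - j - Suc k))))"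
    by (simp add: lmul_conv_def pm.scale_sum_right linearity_simps flip: lessThan_Suc_atMost)
  also have "\<dots> = (\<Sum>k<n. \<Sum>j<n - k. lmul (y k) (scale (w j) (h j (n - j - Suc k))))"
    by (rule sum_triangle_swap)
  also have "\<dots> = lmul_conv y (\<lambda>m. \<Sum>j\<le>m. scale (w j) (h j (m - j))) n"
    unfolding lmul_conv_def
  proof (intro sum.cong refl)
    fix k assume "k \<in> {..<n}"
    then have "n - k = Suc (n - Suc k)"
      by simp
    then show "(\<Sum>j<n - k. lmul (y k) (scale (w j) (h j (n - j - Suc k))))
        = lmul (y k) (\<Sum>j\<le>n - Suc k. scale (w j) (h j (n - Suc k - j)))"
      by (simp add: ncmul.right.sum lessThan_Suc_atMost add.commute)
  qed
  finally show ?thesis .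
qed

lemma lmul_conv_rec_unique:
  assumes X: "\<And>p. X p = L p + lmul_conv y X p"
    and X': "\<And>p. X' p = L p + lmul_conv y X' p"
  shows "X p = X' p"
proof (induction p rule: less_induct)
  case (less p)
  then have "lmul_conv y X p = lmul_conv y X' p"
    by (rule lmul_conv_cong)
  then show ?case
    by (subst X, subst X') simp
qed

section \<open>The expansion of \<open>S\<^sup>r(a\<^sup>p b)\<close>\<close>

context
  fixes c :: "'l \<Rightarrow> 'l \<Rightarrow> ('l, 'b::comm_ring_1) zel" and a :: "('l, 'b) zel"
begin

(* circ_pow k = a o ... o a has k + 1 factors, since z need not be unital. *)
abbreviation circ_pow :: "nat \<Rightarrow> ('l, 'b) zel" where
  "circ_pow k \<equiv> (zmul c a ^^ k) a"

abbreviation S_power :: "nat \<Rightarrow> ('l, 'b) ncpoly" where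
  "S_power n \<equiv> Sr c 1 (ncpow (zet a) n)"

lemma S_power_Suc_lmul: "S_power (Suc n) = lmul a (S_power n) + circ_act c a (S_power n)"
  by (simp add: Sr_lmul)

lemma S_power_Suc: "S_power (Suc n) = lmul_conv circ_pow S_power (Suc n)"
proof (induction n)
  case 0
  show ?case
    by (simp add: S_power_Suc_lmul lmul_conv_def del: ncpow.simps(2))
next
  case (Suc n)
  have "S_power (Suc (Suc n)) = lmul a (S_power (Suc n)) + circ_act c a (S_power (Suc n))"
    by (rule S_power_Suc_lmul)
  also have "circ_act c a (S_power (Suc n)) = lmul_conv (\<lambda>k. circ_pow (Suc k)) S_power (Suc n)"
    by (simp add: Suc.IH circ_act_lmul_conv del: ncpow.simps)
  also have "lmul a (S_power (Suc n)) + \<dots> = lmul_conv circ_pow S_power (Suc (Suc n))"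
    by (simp add: lmul_conv_Suc[of _ _ "Suc n"] del: ncpow.simps)
  finally show ?case .
qed

lemma harm_lmul_S_power:
  "harm c (lmul x U) (S_power m) = lmul x (harm c U (S_power m))
     + lmul_conv circ_pow (\<lambda>j. harm c (lmul x U) (S_power j)) m
     + lmul_conv (\<lambda>k. zmul c x (circ_pow k)) (\<lambda>j. harm c U (S_power j)) m"
proof (cases m)
  case 0
  then show ?thesis by simp
next
  case (Suc n)
  have S_m: "S_power m = lmul_conv circ_pow S_power m"
    unfolding Suc by (rule S_power_Suc)
  show ?thesis
    by (simp only: S_m lmul_conv_def harm.right.sum ncmul.right.sum harm_lmul_lmul sum.distrib)
qed

(* Phi n U is the coefficient of u^n in (U (1 + a u)^-1) * S((1 - a u)^-1). *)
definition Phi :: "nat \<Rightarrow> ('l, 'b) ncpoly \<Rightarrow> ('l, 'b) ncpoly" where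
  "Phi n U = (\<Sum>j\<le>n. scale ((-1) ^ j) (harm c (ncmul U (ncpow (zet a) j)) (S_power (n - j))))"

lemma Phi_lmul:
  "Phi n (lmul x U) = lmul x (Phi n U)
     + lmul_conv circ_pow (\<lambda>m. Phi m (lmul x U)) n
     + lmul_conv (\<lambda>k. zmul c x (circ_pow k)) (\<lambda>m. Phi m U) n"
proof -
  have "Phi n (lmul x U) = (\<Sum>j\<le>n. scale ((-1) ^ j)
      (lmul x (harm c (ncmul U (ncpow (zet a) j)) (S_power (n - j)))
       + lmul_conv circ_pow (\<lambda>m. harm c (lmul x (ncmul U (ncpow (zet a) j))) (S_power m)) (n - j)
       + lmul_conv (\<lambda>k. zmul c x (circ_pow k)) (\<lambda>m. harm c (ncmul U (ncpow (zet a) j)) (S_power m)) (n - j)))"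
    unfolding Phi_def ncmul_assoc by (intro sum.cong refl arg_cong[where f = "scale _"] harm_lmul_S_power)
  also have "\<dots> = lmul x (Phi n U)
     + lmul_conv circ_pow (\<lambda>m. Phi m (lmul x U)) n
     + lmul_conv (\<lambda>k. zmul c x (circ_pow k)) (\<lambda>m. Phi m U) n"
    by (simp add: pm.scale_right_distrib sum.distrib sum_scale_lmul_conv Phi_def ncmul_assoc
        ncmul.right.sum ncmul.scale_right)
  finally show ?thesis .
qed

lemma Phi_Suc: "Phi (Suc n) U = harm c U (S_power (Suc n)) - Phi n (ncmul U (zet a))"
  unfolding Phi_def sum.atMost_Suc_shift by (simp add: ncmul_assoc sum_negf)

lemma Phi_empty: "Phi n empty_word = (if n = 0 then empty_word else 0)"
proof (cases n)
  case 0
  then show ?thesis by (simp add: Phi_def)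
next
  case (Suc m)
  let ?Z = "\<lambda>j. Phi j empty_word"
  have Z_0: "?Z 0 = empty_word"
    by (simp add: Phi_def)
  have Phi_zet_a: "Phi j (zet a) = S_power (Suc j) - ?Z (Suc j)" for j
    using Phi_Suc[of j empty_word] by simp
  have conv_S: "lmul_conv circ_pow (\<lambda>j. S_power (Suc j)) m
      = S_power (Suc m) - lmul (circ_pow m) empty_word"
    using lmul_conv_Suc_last[of circ_pow S_power m] S_power_Suc[of m] by simp
  have conv_Z: "lmul_conv (\<lambda>k. zmul c a (circ_pow k)) ?Z m
      = lmul_conv circ_pow (\<lambda>j. ?Z (Suc j)) m + lmul (circ_pow m) empty_word - lmul a (?Z m)"
    using lmul_conv_Suc[of circ_pow ?Z m] lmul_conv_Suc_last[of circ_pow ?Z m] Z_0 by simp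
  have "Phi m (zet a) = lmul a (?Z m) + lmul_conv circ_pow (\<lambda>j. Phi j (zet a)) m
      + lmul_conv (\<lambda>k. circ_pow (Suc k)) ?Z m"
    using Phi_lmul[of m a empty_word] by simp
  also have "\<dots> = S_power (Suc m)"
    by (simp add: Phi_zet_a lmul_conv_diff conv_S conv_Z del: ncpow.simps)
  finally have "Phi m (zet a) = S_power (Suc m)" .
  then show ?thesis
    using Phi_zet_a[of m] Suc by simp
qed

context
  fixes b :: "('l, 'b) zel" and r :: 'b
begin

lemma Phi_zet:
  assumes comm: "\<And>u v. c u v = c v u"
    and assoc: "\<And>x y z. zmul c (zmul c x y) z = zmul c x (zmul c y z)"
  shows "Phi n (zet b) = lmul ((zmul c a ^^ n) b) empty_word + lmul_conv circ_pow (\<lambda>m. Phi m (zet b)) n"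
proof -
  have expand: "Phi n (zet b) = lmul b (Phi n empty_word) + lmul_conv circ_pow (\<lambda>m. Phi m (zet b)) n
      + lmul_conv (\<lambda>k. zmul c b (circ_pow k)) (\<lambda>m. Phi m empty_word) n"
    using Phi_lmul[of n b empty_word] by simp
  have "lmul b (Phi n empty_word) + lmul_conv (\<lambda>k. zmul c b (circ_pow k)) (\<lambda>m. Phi m empty_word) n
      = lmul ((zmul c a ^^ n) b) empty_word"
  proof (cases n)
    case (Suc m)
    then show ?thesis
      by (simp add: Phi_empty lmul_conv_Suc_last zmul_funpow_swap[OF comm assoc] ncmul.right.zero)
  qed (simp add: Phi_empty)
  then show ?thesis
    unfolding expand by (simp add: ac_simps)
qed

lemma Phi_ncpow_Suc_zet:
  "Phi n (ncmul (ncpow (zet a) (Suc i)) (zet b))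
     = lmul_conv circ_pow (\<lambda>m. Phi m (ncmul (ncpow (zet a) i) (zet b))) (Suc n)
     + lmul_conv circ_pow (\<lambda>m. Phi m (ncmul (ncpow (zet a) (Suc i)) (zet b))) n"
proof -
  have word: "ncmul (ncpow (zet a) (Suc i)) (zet b) = lmul a (ncmul (ncpow (zet a) i) (zet b))"
    by (simp add: ncmul_assoc)
  show ?thesis
    unfolding word Phi_lmul[of n a] lmul_conv_Suc[of circ_pow _ n] by (simp add: ac_simps)
qed

abbreviation scaled_circ_pow :: "nat \<Rightarrow> ('l, 'b) zel" where
  "scaled_circ_pow k \<equiv> scale (r ^ k) (circ_pow k)"

(* expansion p is the right-hand side of the proposition grouped by i: Psi i (p - i) is the sum
   over j together with the factor r^(p-i). *)
definition Psi :: "nat \<Rightarrow> nat \<Rightarrow> ('l, 'b) ncpoly" where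
  "Psi i n = scale (r ^ n) (Phi n (ncmul (ncpow (zet a) i) (zet b)))"

definition expansion :: "nat \<Rightarrow> ('l, 'b) ncpoly" where
  "expansion p = (\<Sum>i\<le>p. scale ((1 - r) ^ i) (Psi i (p - i)))"

lemma Psi_0:
  assumes comm: "\<And>u v. c u v = c v u"
    and assoc: "\<And>x y z. zmul c (zmul c x y) z = zmul c x (zmul c y z)"
  shows "Psi 0 n = scale (r ^ n) (lmul ((zmul c a ^^ n) b) empty_word)
      + scale r (lmul_conv scaled_circ_pow (Psi 0) n)"
  using Phi_zet[OF comm assoc, of n]
  by (simp add: Psi_def[abs_def] pm.scale_right_distrib scale_power_lmul_conv)

lemma Psi_Suc:
  "Psi (Suc i) n = lmul_conv scaled_circ_pow (Psi i) (Suc n)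
     + scale r (lmul_conv scaled_circ_pow (Psi (Suc i)) n)"
  by (simp add: Psi_def[abs_def] Phi_ncpow_Suc_zet[of n i] pm.scale_right_distrib
      scale_power_lmul_conv scale_power_lmul_conv_Suc del: ncpow.simps(2))

lemma expansion_rec:
  assumes comm: "\<And>u v. c u v = c v u"
    and assoc: "\<And>x y z. zmul c (zmul c x y) z = zmul c x (zmul c y z)"
  shows "expansion p = scale (r ^ p) (lmul ((zmul c a ^^ p) b) empty_word)
      + lmul_conv scaled_circ_pow expansion p"
proof -
  let ?L = "scale (r ^ p) (lmul ((zmul c a ^^ p) b) empty_word)"
  define C where "C i = lmul_conv scaled_circ_pow (Psi i) (p - i)" for i
  define T where "T = (\<Sum>i\<le>p. scale ((1 - r) ^ i) (C i))"
  define T' where "T' = (\<Sum>i<p. scale ((1 - r) ^ Suc i) (C (Suc i)))"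
  have Psi_Suc_diff: "Psi (Suc i) (p - Suc i) = C i + scale r (C (Suc i))" if "i < p" for i
    using that Psi_Suc[of i "p - Suc i"] by (simp add: C_def Suc_diff_Suc)
  have T_lessThan: "(\<Sum>i<p. scale ((1 - r) ^ i) (C i)) = T"
    by (simp add: T_def C_def flip: lessThan_Suc_atMost)
  have T_shift: "T = C 0 + T'"
    by (simp add: T_def T'_def sum.atMost_shift)
  have "expansion p = Psi 0 p + (\<Sum>i<p. scale ((1 - r) ^ Suc i) (Psi (Suc i) (p - Suc i)))"
    by (simp add: expansion_def sum.atMost_shift)
  also have "Psi 0 p = ?L + scale r (C 0)"
    using Psi_0[OF comm assoc, of p] by (simp add: C_def)
  also have "(\<Sum>i<p. scale ((1 - r) ^ Suc i) (Psi (Suc i) (p - Suc i)))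
      = (\<Sum>i<p. scale (1 - r) (scale ((1 - r) ^ i) (C i)) + scale r (scale ((1 - r) ^ Suc i) (C (Suc i))))"
    by (intro sum.cong refl) (simp add: Psi_Suc_diff pm.scale_right_distrib mult_ac)
  also have "\<dots> = scale (1 - r) T + scale r T'"
    by (simp only: sum.distrib pm.scale_sum_right[symmetric] T_lessThan T'_def)
  also have "?L + scale r (C 0) + (scale (1 - r) T + scale r T') = ?L + (scale r T + scale (1 - r) T)"
    by (simp add: T_shift pm.scale_right_distrib ac_simps)
  also have "scale r T + scale (1 - r) T = T"
    by (simp flip: pm.scale_left_distrib)
  also have "T = lmul_conv scaled_circ_pow expansion p"
    unfolding T_def C_def sum_scale_lmul_conv by (simp add: expansion_def[abs_def])
  finally show ?thesis .
qed

lemma Sr_ncpow_zet_rec: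
  "Sr c r (ncmul (ncpow (zet a) p) (zet b)) = scale (r ^ p) (lmul ((zmul c a ^^ p) b) empty_word)
     + lmul_conv scaled_circ_pow (\<lambda>m. Sr c r (ncmul (ncpow (zet a) m) (zet b))) p"
proof (induction p)
  case 0
  show ?case
    using Sr_lmul[of c r b empty_word] by simp
next
  case (Suc p)
  let ?F = "\<lambda>m. Sr c r (ncmul (ncpow (zet a) m) (zet b))"
  have "?F (Suc p) = lmul a (?F p) + scale r (circ_act c a (?F p))"
    by (simp add: ncmul_assoc Sr_lmul)
  also have "scale r (circ_act c a (?F p))
      = scale (r ^ Suc p) (lmul ((zmul c a ^^ Suc p) b) empty_word)
      + lmul_conv (\<lambda>k. scaled_circ_pow (Suc k)) ?F p"
    by (subst Suc.IH) (simp add: circ_act.right.add circ_act.scale_right circ_act_zet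
        circ_act_lmul_conv scale_lmul_conv zmul.scale_right pm.scale_right_distrib)
  also have "lmul a (?F p) + \<dots> = scale (r ^ Suc p) (lmul ((zmul c a ^^ Suc p) b) empty_word)
      + lmul_conv scaled_circ_pow ?F (Suc p)"
    by (simp add: lmul_conv_Suc[of _ _ p])
  finally show ?case .
qed

end

end

theorem Sr_ncpow_zet_expansion:
  fixes c :: "'l \<Rightarrow> 'l \<Rightarrow> ('l \<Rightarrow>\<^sub>0 'b::comm_ring_1)" and a b :: "'l \<Rightarrow>\<^sub>0 'b" and r :: 'b
  assumes comm: "\<And>u v. c u v = c v u"
    and assoc: "\<And>x y z. zmul c (zmul c x y) z = zmul c x (zmul c y z)"
  shows "Sr c r (ncmul (ncpow (zet a) p) (zet b))
    = (\<Sum>i\<le>p. \<Sum>j\<le>p - i. scale ((-1) ^ j * r ^ (p - i) * (1 - r) ^ i)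
        (harm c (ncmul (ncmul (ncpow (zet a) i) (zet b)) (ncpow (zet a) j))
          (Sr c 1 (ncpow (zet a) (p - i - j)))))"
proof -
  have "Sr c r (ncmul (ncpow (zet a) p) (zet b)) = expansion c a b r p"
    by (rule lmul_conv_rec_unique[where X' = "expansion c a b r"])
      (rule Sr_ncpow_zet_rec, rule expansion_rec[OF comm assoc])
  also have "\<dots> = (\<Sum>i\<le>p. \<Sum>j\<le>p - i. scale ((-1) ^ j * r ^ (p - i) * (1 - r) ^ i)
        (harm c (ncmul (ncmul (ncpow (zet a) i) (zet b)) (ncpow (zet a) j))
          (Sr c 1 (ncpow (zet a) (p - i - j)))))"
    by (simp add: expansion_def Psi_def Phi_def pm.scale_sum_right mult_ac)
  finally show ?thesis .
qed

theorem proposition2p6: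
  fixes c :: "'l \<Rightarrow> 'l \<Rightarrow> ('l \<Rightarrow>\<^sub>0 'a::comm_ring_1)"
    and a1 a2 :: "'l \<Rightarrow>\<^sub>0 'a"
    and p :: nat
  assumes Qalg: "\<And>n::nat. n > 0 \<Longrightarrow> \<exists>x::'a. of_nat n * x = 1"
    and comm: "\<And>a b. c a b = c b a"
    and assoc: "\<And>x y z. zmul c (zmul c x y) z = zmul c x (zmul c y z)"
    and p_pos: "p > 0"
  shows
    "let C = (\<lambda>a b. liftc (c a b)); r = [:0, 1:] :: 'a poly;
         A1 = zet (liftc a1); A2 = zet (liftc a2)
     in Sr C r (ncmul (ncpow A1 p) A2)
        = (\<Sum>i\<le>p. \<Sum>j\<le>p - i.
             scale ((-1) ^ j * r ^ (p - i) * (1 - r) ^ i)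
               (harm C (ncmul (ncmul (ncpow A1 i) A2) (ncpow A1 j))
                       (Sr C 1 (ncpow A1 (p - i - j)))))"
  unfolding Let_def
  by (rule Sr_ncpow_zet_expansion) (simp_all add: comm zmul_liftc_assoc[OF assoc])

end
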